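(* Let $K\ge2$ and let $|H_1|^2,\dots,|H_K|^2,|H_e|^2$ be i.i.d. exponential random variables with unit mean, and let $|H_{\max}|^2=\max_{1\le i\le K}|H_i|^2$. Then $$E\left[\log\frac{|H_e|^2}{|H_{\max}|^2}\ \Big|\ |H_e|^2\ge|H_{\max}|^2\right]\le2\log2.$$
   Context: The logarithm is to any fixed base, the same on both sides. *)

theory Defs
  imports "HOL-Probability.Probability"
begin

definition cond_exp_event :: "'a measure \<Rightarrow> ('a \<Rightarrow> real) \<Rightarrow> 'a set \<Rightarrow> real" where
  "cond_exp_event M f A = (LINT x:A|M. f x) / measure M A"

end

theory Submission
  imports Defs
begin

(*
  Write X = H 0, Y = max of H 1, ..., H K, and u(t) = 1 - exp (-t).  On the event Y <= X,
  ln (X / Y) is the integral of 1/t over [Y, X), so by Tonelli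
    E[ln (X / Y); Y <= X] = integral over t > 0 of P(Y <= t < X) / t = integral of exp (-t) u^K / t,
  using independence and P(H i <= t) = u(t).  The inequality tanh (t/2) <= t/2 reads
  u(t) / t <= 1 - u(t) / 2, which bounds the integrand by u^(K-1) (1 - u/2) exp (-t); the
  substitution u = u(t) turns this into the integral of u^(K-1) (1 - u/2) over [0, 1], which is
  1/K - 1/(2(K+1)).  Since P(Y <= X) = 1/(K+1), the conditional expectation of the natural
  logarithm is at most 1/2 + 1/K <= 1 <= 2 ln 2, and passing to base b divides both sides by ln b.
*)

lemma tanh_real_le_self:
  fixes x :: real assumes "0 \<le> x"
  shows "tanh x \<le> x"
proof -
  have "0 - tanh 0 \<le> x - tanh x"
    by (rule DERIV_nonneg_imp_nondecreasing[OF assms])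
       (auto intro!: exI derivative_eq_intros)
  then show ?thesis by simp
qed

lemma one_minus_exp_neg_div_le:
  fixes t :: real assumes "0 < t"
  shows "(1 - exp (-t)) / t \<le> 1 - (1 - exp (-t)) / 2"
proof -
  have "(1 - exp (-t)) / (1 + exp (-t)) \<le> t / 2"
    using tanh_real_le_self[of "t / 2"] assms by (simp add: tanh_real_altdef)
  moreover have "0 < 1 + exp (-t)" by (simp add: add_pos_pos)
  ultimately show ?thesis
    using assms by (simp add: field_simps)
qed

lemma one_minus_exp_neg_power_div_le:
  fixes t :: real assumes "0 < t" "1 \<le> n"
  shows "exp (-t) * (1 - exp (-t)) ^ n / t \<le> (1 - exp (-t)) ^ (n - 1) * (1 - (1 - exp (-t)) / 2) * exp (-t)"
proof -
  let ?u = "1 - exp (-t)"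
  have "?u ^ n = ?u ^ (n - 1) * ?u"
    using assms(2) by (simp add: power_eq_if)
  then have "exp (-t) * ?u ^ n / t = ?u ^ (n - 1) * (?u / t) * exp (-t)"
    by (simp add: mult_ac)
  also have "\<dots> \<le> ?u ^ (n - 1) * (1 - ?u / 2) * exp (-t)"
    using one_minus_exp_neg_div_le[OF assms(1)] assms(1) by (intro mult_right_mono mult_left_mono) auto
  finally show ?thesis .
qed

lemma nn_integral_exp_neg_substitution:
  fixes p P :: "real \<Rightarrow> real"
  assumes [measurable]: "p \<in> borel_measurable borel"
    and deriv: "\<And>u. u \<in> {0..1} \<Longrightarrow> (P has_real_derivative p u) (at u)"
    and nonneg: "\<And>u. u \<in> {0..1} \<Longrightarrow> 0 \<le> p u"
  shows "(\<integral>\<^sup>+t. ennreal (p (1 - exp (-t)) * exp (-t)) * indicator {0..} t \<partial>lborel) = ennreal (P 1 - P 0)"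
proof -
  have range: "1 - exp (-t) \<in> {0..1}" if "0 \<le> t" for t :: real
    using that by auto
  have "((\<lambda>t. exp (-t)) \<longlongrightarrow> (0::real)) at_top"
    by (intro filterlim_compose[OF exp_at_bot] filterlim_uminus_at_bot_at_top)
  then have "((\<lambda>t. 1 - exp (-t)) \<longlongrightarrow> (1::real)) at_top"
    using tendsto_diff[OF tendsto_const] by fastforce
  moreover have "isCont P 1"
    using deriv[of 1] by (auto intro: DERIV_isCont)
  ultimately have "((\<lambda>t. P (1 - exp (-t))) \<longlongrightarrow> P 1) at_top"
    using isCont_tendsto_compose by force
  moreover have "((\<lambda>t. P (1 - exp (-t))) has_real_derivative p (1 - exp (-t)) * exp (-t)) (at t)"
    if "0 \<le> t" for t
    by (rule DERIV_chain2[where g = "\<lambda>t. 1 - exp (-t)", OF deriv[OF range[OF that]]])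
       (auto intro!: derivative_eq_intros)
  ultimately show ?thesis
    using range nonneg
    by (subst nn_integral_FTC_atLeast[where F = "\<lambda>t. P (1 - exp (-t))"]) auto
qed

lemma nn_integral_one_minus_exp_neg_power:
  "(\<integral>\<^sup>+t. ennreal ((1 - exp (-t)) ^ n * exp (-t)) * indicator {0..} t \<partial>lborel)
     = ennreal (1 / (real n + 1))"
proof -
  have "((\<lambda>u. u ^ Suc n / Suc n) has_real_derivative u ^ n) (at u)" for u :: real
    using DERIV_cdivide[OF DERIV_pow[of "Suc n"], of "Suc n"] by simp
  then show ?thesis
    by (subst nn_integral_exp_neg_substitution[where P = "\<lambda>u. u ^ Suc n / Suc n"]) auto
qed

lemma nn_integral_one_minus_exp_neg_majorant:
  assumes "1 \<le> n"
  shows "(\<integral>\<^sup>+t. ennreal ((1 - exp (-t)) ^ (n - 1) * (1 - (1 - exp (-t)) / 2) * exp (-t))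
            * indicator {0..} t \<partial>lborel)
     = ennreal (1 / n - 1 / (2 * (real n + 1)))"
proof -
  define P :: "real \<Rightarrow> real" where "P u = u ^ n / n - u ^ Suc n / (2 * Suc n)" for u
  have deriv: "(P has_real_derivative u ^ (n - 1) * (1 - u / 2)) (at u)" for u
  proof -
    have "(P has_real_derivative
        real n * u ^ (n - Suc 0) / n - real (Suc n) * u ^ (Suc n - Suc 0) / (2 * Suc n)) (at u)"
      unfolding P_def by (intro DERIV_diff DERIV_cdivide DERIV_pow)
    moreover have "real n * u ^ (n - Suc 0) / n - real (Suc n) * u ^ (Suc n - Suc 0) / (2 * Suc n)
        = u ^ (n - 1) * (1 - u / 2)"
      using assms by (simp add: power_eq_if field_simps)
    ultimately show ?thesis by simp
  qed
  have "(\<integral>\<^sup>+t. ennreal ((1 - exp (-t)) ^ (n - 1) * (1 - (1 - exp (-t)) / 2) * exp (-t))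
            * indicator {0..} t \<partial>lborel) = ennreal (P 1 - P 0)"
    by (rule nn_integral_exp_neg_substitution) (use deriv in auto)
  also have "P 1 - P 0 = 1 / n - 1 / (2 * (real n + 1))"
    using assms by (simp add: P_def power_0_left)
  finally show ?thesis .
qed

lemma nn_integral_inverse_Ico:
  fixes a b :: real assumes "0 < a" "a \<le> b"
  shows "(\<integral>\<^sup>+t. ennreal (1 / t) * indicator {a..<b} t \<partial>lborel) = ennreal (ln b - ln a)"
proof -
  have "(\<integral>\<^sup>+t. ennreal (1 / t) * indicator {a..<b} t \<partial>lborel)
      = (\<integral>\<^sup>+t. ennreal (1 / t) * indicator {a..b} t \<partial>lborel)"
    by (intro nn_integral_cong_AE)
       (auto intro!: eventually_mono[OF AE_lborel_singleton[of b]] split: split_indicator)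
  also have "\<dots> = ln b - ln a"
  proof (rule nn_integral_FTC_Icc)
    fix x assume "x \<in> {a..b}"
    with assms show "DERIV ln x :> 1 / x" "0 \<le> 1 / x"
      by (auto intro!: derivative_eq_intros)
  qed (use assms in auto)
  finally show ?thesis .
qed

lemma (in sigma_finite_measure) nn_integral_ln_ratio_eq:
  fixes X Y :: "'a \<Rightarrow> real"
  assumes [measurable]: "X \<in> borel_measurable M" "Y \<in> borel_measurable M"
    and Y_pos: "AE \<omega> in M. 0 < Y \<omega>"
  shows "(\<integral>\<^sup>+\<omega>. indicator {\<omega> \<in> space M. Y \<omega> \<le> X \<omega>} \<omega> * ennreal (ln (X \<omega> / Y \<omega>)) \<partial>M)
       = (\<integral>\<^sup>+t. ennreal (1 / t) * emeasure M {\<omega> \<in> space M. Y \<omega> \<le> t \<and> t < X \<omega>}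
            * indicator {0<..} t \<partial>lborel)"
proof -
  interpret pair_sigma_finite M lborel
    by (intro pair_sigma_finite.intro sigma_finite_measure_axioms lborel.sigma_finite_measure_axioms)
  define \<Phi> where
    "\<Phi> \<omega> t = (if Y \<omega> \<le> t \<and> t < X \<omega> \<and> 0 < t then ennreal (1 / t) else 0)" for \<omega> t
  have [measurable]: "case_prod \<Phi> \<in> borel_measurable (M \<Otimes>\<^sub>M lborel)"
    unfolding \<Phi>_def by measurable
  have \<Phi>_inner: "AE \<omega> in M. indicator {\<omega> \<in> space M. Y \<omega> \<le> X \<omega>} \<omega> * ennreal (ln (X \<omega> / Y \<omega>))
      = (\<integral>\<^sup>+t. \<Phi> \<omega> t \<partial>lborel)"
  proof (rule eventually_mono[OF eventually_conj[OF Y_pos AE_space]])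
    fix \<omega> assume \<omega>: "0 < Y \<omega> \<and> \<omega> \<in> space M"
    have "(\<integral>\<^sup>+t. \<Phi> \<omega> t \<partial>lborel) = (\<integral>\<^sup>+t. ennreal (1 / t) * indicator {Y \<omega>..<X \<omega>} t \<partial>lborel)"
      using \<omega> by (intro nn_integral_cong) (auto simp: \<Phi>_def split: split_indicator)
    then show "indicator {\<omega> \<in> space M. Y \<omega> \<le> X \<omega>} \<omega> * ennreal (ln (X \<omega> / Y \<omega>))
        = (\<integral>\<^sup>+t. \<Phi> \<omega> t \<partial>lborel)"
      using \<omega> nn_integral_inverse_Ico[of "Y \<omega>" "X \<omega>"] by (cases "Y \<omega> \<le> X \<omega>") (auto simp: ln_div)
  qed
  have "(\<integral>\<^sup>+\<omega>. indicator {\<omega> \<in> space M. Y \<omega> \<le> X \<omega>} \<omega> * ennreal (ln (X \<omega> / Y \<omega>)) \<partial>M)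
      = (\<integral>\<^sup>+\<omega>. (\<integral>\<^sup>+t. \<Phi> \<omega> t \<partial>lborel) \<partial>M)"
    by (rule nn_integral_cong_AE[OF \<Phi>_inner])
  also have "\<dots> = (\<integral>\<^sup>+t. (\<integral>\<^sup>+\<omega>. \<Phi> \<omega> t \<partial>M) \<partial>lborel)"
    by (rule Fubini'[symmetric]) measurable
  also have "\<dots> = (\<integral>\<^sup>+t. ennreal (1 / t) * emeasure M {\<omega> \<in> space M. Y \<omega> \<le> t \<and> t < X \<omega>}
      * indicator {0<..} t \<partial>lborel)"
  proof (intro nn_integral_cong)
    fix t :: real
    have "(\<integral>\<^sup>+\<omega>. \<Phi> \<omega> t \<partial>M)
        = (\<integral>\<^sup>+\<omega>. ennreal (1 / t) * indicator {\<omega> \<in> space M. Y \<omega> \<le> t \<and> t < X \<omega>} \<omega>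
            * indicator {0<..} t \<partial>M)"
      by (intro nn_integral_cong) (auto simp: \<Phi>_def split: split_indicator)
    then show "(\<integral>\<^sup>+\<omega>. \<Phi> \<omega> t \<partial>M) = ennreal (1 / t) * emeasure M {\<omega> \<in> space M. Y \<omega> \<le> t \<and> t < X \<omega>}
        * indicator {0<..} t"
      by (simp add: nn_integral_cmult_indicator nn_integral_multc)
  qed
  finally show ?thesis .
qed

lemma (in prob_space) indep_var_Max:
  fixes H :: "'i \<Rightarrow> 'a \<Rightarrow> real"
  assumes "indep_vars (\<lambda>_. borel) H J" "j \<in> J" "I \<subseteq> J - {j}" "finite I"
  shows "indep_var borel (H j) borel (\<lambda>\<omega>. Max ((\<lambda>i. H i \<omega>) ` I))"
proof -
  have "indep_var (PiM {j} (\<lambda>_. borel)) (\<lambda>\<omega>. restrict (\<lambda>i. H i \<omega>) {j})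
                  (PiM I (\<lambda>_. borel)) (\<lambda>\<omega>. restrict (\<lambda>i. H i \<omega>) I)"
    by (rule indep_var_restrict[OF assms(1)]) (use assms in auto)
  then have "indep_var borel ((\<lambda>f. f j) \<circ> (\<lambda>\<omega>. restrict (\<lambda>i. H i \<omega>) {j}))
                  borel ((\<lambda>f. Max (f ` I)) \<circ> (\<lambda>\<omega>. restrict (\<lambda>i. H i \<omega>) I))"
  proof (rule indep_var_compose)
    show "(\<lambda>f. Max (f ` I)) \<in> borel_measurable (PiM I (\<lambda>_. borel :: real measure))"
      by (rule borel_measurable_Max) (use assms in auto)
  qed measurable
  also have "(\<lambda>f. Max (f ` I)) \<circ> (\<lambda>\<omega>. restrict (\<lambda>i. H i \<omega>) I) = (\<lambda>\<omega>. Max ((\<lambda>i. H i \<omega>) ` I))"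
    unfolding o_def by (intro ext arg_cong[where f = Max] image_cong) auto
  finally show ?thesis
    by (simp add: o_def)
qed

lemma (in prob_space) emeasure_le_indep_var:
  fixes X Y :: "'a \<Rightarrow> real"
  assumes "indep_var borel X borel Y"
  shows "emeasure M {\<omega> \<in> space M. Y \<omega> \<le> X \<omega>} = (\<integral>\<^sup>+x. emeasure M {\<omega> \<in> space M. Y \<omega> \<le> x} \<partial>distr M borel X)"
proof -
  have [measurable]: "X \<in> borel_measurable M" "Y \<in> borel_measurable M"
    using assms by (auto dest: indep_var_rv1 indep_var_rv2)
  interpret Y: prob_space "distr M borel Y"
    by (rule prob_space_distr) simp
  define S where "S = {p :: real \<times> real. snd p \<le> fst p}"
  have S: "S \<in> sets (borel \<Otimes>\<^sub>M borel)"
    unfolding S_def borel_prod by (intro borel_closed closed_Collect_le continuous_intros)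
  have "emeasure M {\<omega> \<in> space M. Y \<omega> \<le> X \<omega>} = emeasure (distr M (borel \<Otimes>\<^sub>M borel) (\<lambda>\<omega>. (X \<omega>, Y \<omega>))) S"
    by (subst emeasure_distr[OF _ S]) (auto simp: S_def intro!: arg_cong[where f = "emeasure M"])
  also have "\<dots> = emeasure (distr M borel X \<Otimes>\<^sub>M distr M borel Y) S"
    using assms by (simp add: indep_var_distribution_eq)
  also have "\<dots> = (\<integral>\<^sup>+x. emeasure (distr M borel Y) (Pair x -` S) \<partial>distr M borel X)"
    by (rule Y.emeasure_pair_measure_alt) (simp add: S)
  also have "\<dots> = (\<integral>\<^sup>+x. emeasure M {\<omega> \<in> space M. Y \<omega> \<le> x} \<partial>distr M borel X)"
    by (intro nn_integral_cong)
       (auto simp: emeasure_distr S_def intro!: arg_cong[where f = "emeasure M"])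
  finally show ?thesis .
qed

lemma set_integral_le_of_nn_integral_le:
  fixes f :: "'a \<Rightarrow> real"
  assumes [measurable]: "A \<in> sets M" "f \<in> borel_measurable M"
    and nonneg: "AE x in M. x \<in> A \<longrightarrow> 0 \<le> f x"
    and bound: "(\<integral>\<^sup>+x. indicator A x * ennreal (f x) \<partial>M) \<le> ennreal c" and "0 \<le> c"
  shows "set_integrable M A f \<and> (LINT x:A|M. f x) \<le> c"
proof -
  let ?g = "\<lambda>x. indicator A x *\<^sub>R f x"
  have g_measurable: "?g \<in> borel_measurable M"
    by measurable
  have g_nonneg: "AE x in M. 0 \<le> ?g x"
    using nonneg by eventually_elim (simp split: split_indicator)
  have "(\<integral>\<^sup>+x. ennreal (?g x) \<partial>M) = (\<integral>\<^sup>+x. indicator A x * ennreal (f x) \<partial>M)"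
    by (intro nn_integral_cong) (simp split: split_indicator)
  with bound have nn_le: "(\<integral>\<^sup>+x. ennreal (?g x) \<partial>M) \<le> ennreal c"
    by simp
  then have "integrable M ?g"
    by (intro integrableI_nonneg g_measurable g_nonneg) (auto simp: top.not_eq_extremum intro: le_less_trans)
  moreover have "integral\<^sup>L M ?g = enn2real (\<integral>\<^sup>+x. ennreal (?g x) \<partial>M)"
    by (rule integral_eq_nn_integral[OF g_measurable g_nonneg])
  moreover have "enn2real (\<integral>\<^sup>+x. ennreal (?g x) \<partial>M) \<le> c"
    using enn2real_mono[OF nn_le] \<open>0 \<le> c\<close> by simp
  ultimately show ?thesis
    by (simp add: set_integrable_def set_lebesgue_integral_def)
qed

locale iid_exponential = prob_space +
  fixes H :: "'i \<Rightarrow> 'a \<Rightarrow> real" and J :: "'i set"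
  assumes indep: "indep_vars (\<lambda>_. borel) H J"
    and exponential: "\<And>i. i \<in> J \<Longrightarrow> distributed M lborel (H i) (exponential_density 1)"
begin

lemma measurable_H [measurable]: "i \<in> J \<Longrightarrow> H i \<in> borel_measurable M"
  using distributed_measurable[OF exponential] by simp

lemma prob_H_le:
  assumes "i \<in> J" "0 \<le> t"
  shows "prob (H i -` {..t} \<inter> space M) = 1 - exp (-t)"
  using exponential_distributedD_le[OF exponential[OF assms(1)] assms(2)]
  by (simp add: Int_commute vimage_def Collect_conj_eq)

lemma prob_H_gt:
  assumes "i \<in> J" "0 \<le> t"
  shows "prob (H i -` {t<..} \<inter> space M) = exp (-t)"
  using exponential_distributedD_gt[OF exponential[OF assms(1)] assms(2)]
  by (simp add: Int_commute vimage_def Collect_conj_eq)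

lemma AE_H_pos: "i \<in> J \<Longrightarrow> AE \<omega> in M. 0 < H i \<omega>"
  using prob_H_le[of i 0]
  by (intro AE_I'[where N = "H i -` {..0} \<inter> space M"]) (auto simp: emeasure_eq_measure null_sets_def)

lemma AE_Max_pos:
  assumes "I \<subseteq> J" "finite I" "I \<noteq> {}"
  shows "AE \<omega> in M. 0 < Max ((\<lambda>i. H i \<omega>) ` I)"
proof -
  obtain i where "i \<in> I" using assms by auto
  with assms have "AE \<omega> in M. 0 < H i \<omega>"
    by (intro AE_H_pos) auto
  then show ?thesis
    by (rule eventually_mono) (use \<open>i \<in> I\<close> assms in \<open>auto simp: Max_gr_iff\<close>)
qed

lemma borel_measurable_Max_H:
  assumes "I \<subseteq> J" "finite I"
  shows "(\<lambda>\<omega>. Max ((\<lambda>i. H i \<omega>) ` I)) \<in> borel_measurable M"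
  using assms by (intro borel_measurable_Max) auto

lemma prob_Max_le:
  assumes "I \<subseteq> J" "finite I" "I \<noteq> {}" "0 \<le> t"
  shows "prob {\<omega> \<in> space M. Max ((\<lambda>i. H i \<omega>) ` I) \<le> t} = (1 - exp (-t)) ^ card I"
proof -
  have "{\<omega> \<in> space M. Max ((\<lambda>i. H i \<omega>) ` I) \<le> t} = (\<Inter>i\<in>I. H i -` {..t} \<inter> space M)"
    using assms by auto
  then show ?thesis
    using indep_varsD[OF indep, of I "\<lambda>_. {..t}"] assms prob_H_le by (simp add: subset_eq)
qed

lemma prob_Max_le_less:
  assumes "j \<in> J" "I \<subseteq> J - {j}" "finite I" "I \<noteq> {}" "0 \<le> t"
  shows "prob {\<omega> \<in> space M. Max ((\<lambda>i. H i \<omega>) ` I) \<le> t \<and> t < H j \<omega>}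
    = exp (-t) * (1 - exp (-t)) ^ card I"
proof -
  define A where "A i = (if i = j then {t<..} else {..t})" for i
  have "{\<omega> \<in> space M. Max ((\<lambda>i. H i \<omega>) ` I) \<le> t \<and> t < H j \<omega>} = (\<Inter>i\<in>insert j I. H i -` A i \<inter> space M)"
    using assms by (auto simp: A_def subset_eq)
  also have "prob \<dots> = (\<Prod>i\<in>insert j I. prob (H i -` A i \<inter> space M))"
    using assms by (intro indep_varsD[OF indep]) (auto simp: A_def)
  also have "\<dots> = prob (H j -` A j \<inter> space M) * (\<Prod>i\<in>I. prob (H i -` A i \<inter> space M))"
    using assms by (subst prod.insert) auto
  also have "(\<Prod>i\<in>I. prob (H i -` A i \<inter> space M)) = (\<Prod>i\<in>I. 1 - exp (-t))"
    using assms by (intro prod.cong) (auto simp: A_def prob_H_le)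
  finally show ?thesis
    using assms by (simp add: A_def prob_H_gt)
qed

lemma prob_Max_le_H:
  assumes "j \<in> J" "I \<subseteq> J - {j}" "finite I" "I \<noteq> {}"
  shows "prob {\<omega> \<in> space M. Max ((\<lambda>i. H i \<omega>) ` I) \<le> H j \<omega>} = 1 / (real (card I) + 1)"
proof -
  have "distr M borel (H j) = distr M lborel (H j)"
    by (rule distr_cong) auto
  also have "\<dots> = density lborel (exponential_density 1)"
    by (rule distributed_distr_eq_density[OF exponential[OF assms(1)]])
  finally have distr_H: "distr M borel (H j) = density lborel (exponential_density 1)" .
  have [measurable]: "(\<lambda>\<omega>. Max ((\<lambda>i. H i \<omega>) ` I)) \<in> borel_measurable M"
    using assms by (intro borel_measurable_Max_H) auto
  have "mono (\<lambda>x. prob {\<omega> \<in> space M. Max ((\<lambda>i. H i \<omega>) ` I) \<le> x})"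
  proof (intro monoI finite_measure_mono)
    fix x y :: real assume "x \<le> y"
    then show "{\<omega> \<in> space M. Max ((\<lambda>i. H i \<omega>) ` I) \<le> x} \<subseteq> {\<omega> \<in> space M. Max ((\<lambda>i. H i \<omega>) ` I) \<le> y}"
      by (auto simp del: Max_le_iff)
  qed measurable
  then have [measurable]:
    "(\<lambda>x. emeasure M {\<omega> \<in> space M. Max ((\<lambda>i. H i \<omega>) ` I) \<le> x}) \<in> borel_measurable borel"
    unfolding emeasure_eq_measure by (rule measurable_compose[OF borel_measurable_mono measurable_ennreal])
  have "emeasure M {\<omega> \<in> space M. Max ((\<lambda>i. H i \<omega>) ` I) \<le> H j \<omega>}
      = (\<integral>\<^sup>+x. emeasure M {\<omega> \<in> space M. Max ((\<lambda>i. H i \<omega>) ` I) \<le> x} \<partial>distr M borel (H j))"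
    using assms by (intro emeasure_le_indep_var indep_var_Max[OF indep])
  also have "\<dots> = (\<integral>\<^sup>+x. ennreal (exponential_density 1 x)
      * emeasure M {\<omega> \<in> space M. Max ((\<lambda>i. H i \<omega>) ` I) \<le> x} \<partial>lborel)"
    unfolding distr_H by (rule nn_integral_density) auto
  also have "\<dots> = (\<integral>\<^sup>+x. ennreal ((1 - exp (-x)) ^ card I * exp (-x)) * indicator {0..} x \<partial>lborel)"
  proof (intro nn_integral_cong)
    fix x :: real
    show "ennreal (exponential_density 1 x) * emeasure M {\<omega> \<in> space M. Max ((\<lambda>i. H i \<omega>) ` I) \<le> x}
        = ennreal ((1 - exp (-x)) ^ card I * exp (-x)) * indicator {0..} x"
    proof (cases "0 \<le> x")
      case True
      then have "prob {\<omega> \<in> space M. Max ((\<lambda>i. H i \<omega>) ` I) \<le> x} = (1 - exp (-x)) ^ card I"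
        using prob_Max_le[of I x] assms by blast
      then show ?thesis
        by (simp add: exponential_density_def emeasure_eq_measure ennreal_mult''[symmetric] mult.commute
            del: Max_le_iff)
    qed (simp add: exponential_density_def)
  qed
  also have "\<dots> = ennreal (1 / (real (card I) + 1))"
    by (rule nn_integral_one_minus_exp_neg_power)
  finally show ?thesis
    by (simp add: emeasure_eq_measure del: of_nat_Suc)
qed

lemma nn_integral_ln_ratio_Max_le:
  assumes "j \<in> J" "I \<subseteq> J - {j}" "finite I" "I \<noteq> {}"
  defines "E \<equiv> {\<omega> \<in> space M. Max ((\<lambda>i. H i \<omega>) ` I) \<le> H j \<omega>}"
  shows "(\<integral>\<^sup>+\<omega>. indicator E \<omega> * ennreal (ln (H j \<omega> / Max ((\<lambda>i. H i \<omega>) ` I))) \<partial>M)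
    \<le> ennreal (1 / card I - 1 / (2 * (real (card I) + 1)))"
proof -
  let ?n = "card I" and ?u = "\<lambda>t::real. 1 - exp (-t)"
  have n: "1 \<le> ?n" using assms by (simp add: Suc_le_eq card_gt_0_iff)
  have "(\<integral>\<^sup>+\<omega>. indicator E \<omega> * ennreal (ln (H j \<omega> / Max ((\<lambda>i. H i \<omega>) ` I))) \<partial>M)
      = (\<integral>\<^sup>+t. ennreal (1 / t) * emeasure M {\<omega> \<in> space M. Max ((\<lambda>i. H i \<omega>) ` I) \<le> t \<and> t < H j \<omega>}
          * indicator {0<..} t \<partial>lborel)"
    unfolding E_def using assms
    by (intro nn_integral_ln_ratio_eq AE_Max_pos borel_measurable_Max) auto
  also have "\<dots> \<le> (\<integral>\<^sup>+t. ennreal (?u t ^ (?n - 1) * (1 - ?u t / 2) * exp (-t)) * indicator {0..} t \<partial>lborel)"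
  proof (rule nn_integral_mono)
    fix t :: real
    show "ennreal (1 / t) * emeasure M {\<omega> \<in> space M. Max ((\<lambda>i. H i \<omega>) ` I) \<le> t \<and> t < H j \<omega>}
        * indicator {0<..} t
      \<le> ennreal (?u t ^ (?n - 1) * (1 - ?u t / 2) * exp (-t)) * indicator {0..} t"
    proof (cases "0 < t")
      case True
      then have "ennreal (1 / t) * emeasure M {\<omega> \<in> space M. Max ((\<lambda>i. H i \<omega>) ` I) \<le> t \<and> t < H j \<omega>}
          = ennreal (exp (-t) * ?u t ^ ?n / t)"
        using prob_Max_le_less[OF assms(1-4) less_imp_le[OF True]]
        by (simp add: emeasure_eq_measure ennreal_mult''[symmetric])
      also have "\<dots> \<le> ennreal (?u t ^ (?n - 1) * (1 - ?u t / 2) * exp (-t))"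
        using one_minus_exp_neg_power_div_le[OF True n] by (rule ennreal_leI)
      finally show ?thesis
        using True by simp
    qed simp
  qed
  also have "\<dots> = ennreal (1 / ?n - 1 / (2 * (real ?n + 1)))"
    using n by (rule nn_integral_one_minus_exp_neg_majorant)
  finally show ?thesis .
qed

lemma cond_exp_event_ln_ratio_Max_le:
  assumes "j \<in> J" "I \<subseteq> J - {j}" "finite I" "I \<noteq> {}"
  defines "E \<equiv> {\<omega> \<in> space M. Max ((\<lambda>i. H i \<omega>) ` I) \<le> H j \<omega>}"
  shows "set_integrable M E (\<lambda>\<omega>. ln (H j \<omega> / Max ((\<lambda>i. H i \<omega>) ` I)))
    \<and> cond_exp_event M (\<lambda>\<omega>. ln (H j \<omega> / Max ((\<lambda>i. H i \<omega>) ` I))) E \<le> 1 / 2 + 1 / card I"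
proof -
  let ?n = "card I" and ?f = "\<lambda>\<omega>. ln (H j \<omega> / Max ((\<lambda>i. H i \<omega>) ` I))"
  have n: "1 \<le> ?n" using assms by (simp add: Suc_le_eq card_gt_0_iff)
  have [measurable]: "(\<lambda>\<omega>. Max ((\<lambda>i. H i \<omega>) ` I)) \<in> borel_measurable M"
    using assms by (intro borel_measurable_Max_H) auto
  have "H j \<in> borel_measurable M" using assms by simp
  then have E_events [measurable]: "E \<in> sets M"
    unfolding E_def by measurable
  have f_measurable [measurable]: "?f \<in> borel_measurable M"
    using \<open>H j \<in> borel_measurable M\<close> by measurable
  have "AE \<omega> in M. 0 < Max ((\<lambda>i. H i \<omega>) ` I)"
    using assms by (intro AE_Max_pos) auto
  then have "AE \<omega> in M. \<omega> \<in> E \<longrightarrow> 0 \<le> ?f \<omega>"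
    by (rule eventually_mono) (simp add: E_def le_divide_eq_1_pos)
  moreover have "0 \<le> 1 / ?n - 1 / (2 * (real ?n + 1))"
    using n by (simp add: divide_simps)
  ultimately have f: "set_integrable M E ?f \<and> (LINT \<omega>:E|M. ?f \<omega>) \<le> 1 / ?n - 1 / (2 * (real ?n + 1))"
    using nn_integral_ln_ratio_Max_le[OF assms(1-4), folded E_def] E_events f_measurable
    by (intro set_integral_le_of_nn_integral_le) auto
  have "prob E = 1 / (real ?n + 1)"
    unfolding E_def by (rule prob_Max_le_H[OF assms(1-4)])
  then have "cond_exp_event M ?f E = (LINT \<omega>:E|M. ?f \<omega>) * (real ?n + 1)"
    by (simp add: cond_exp_event_def)
  also have "\<dots> \<le> (1 / ?n - 1 / (2 * (real ?n + 1))) * (real ?n + 1)"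
    using f by (intro mult_right_mono) auto
  also have "\<dots> = 1 / 2 + 1 / ?n"
    using n by (simp add: divide_simps)
  finally show ?thesis
    using f by simp
qed

end

theorem lemma8:
  fixes M :: "'a measure" and H :: "nat \<Rightarrow> 'a \<Rightarrow> real" and K :: nat and b :: real
  assumes "prob_space M"
    and "K \<ge> 2"
    and "b > 1"
    and "prob_space.indep_vars M (\<lambda>_. borel) H {0..K}"
    and "\<And>i. i \<in> {0..K} \<Longrightarrow> distributed M lborel (H i) (exponential_density 1)"
  shows "set_integrable M {\<omega> \<in> space M. H 0 \<omega> \<ge> Max ((\<lambda>i. H i \<omega>) ` {1..K})} (\<lambda>\<omega>. log b (H 0 \<omega> / Max ((\<lambda>i. H i \<omega>) ` {1..K})))
    \<and> cond_exp_event M (\<lambda>\<omega>. log b (H 0 \<omega> / Max ((\<lambda>i. H i \<omega>) ` {1..K}))) {\<omega> \<in> space M. H 0 \<omega> \<ge> Max ((\<lambda>i. H i \<omega>) ` {1..K})} \<le> 2 * log b 2"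
proof -
  interpret iid_exponential M H "{0..K}"
    by (intro iid_exponential.intro iid_exponential_axioms.intro assms(1,4,5))
  define E where "E = {\<omega> \<in> space M. Max ((\<lambda>i. H i \<omega>) ` {1..K}) \<le> H 0 \<omega>}"
  let ?f = "\<lambda>\<omega>. ln (H 0 \<omega> / Max ((\<lambda>i. H i \<omega>) ` {1..K}))"
  have "set_integrable M E ?f \<and> cond_exp_event M ?f E \<le> 1 / 2 + 1 / card {1..K}"
    unfolding E_def by (rule cond_exp_event_ln_ratio_Max_le) (use assms(2) in auto)
  then have f: "set_integrable M E ?f" "cond_exp_event M ?f E \<le> 1 / 2 + 1 / K"
    by simp_all
  have "1 / real K \<le> 1 / 2"
    using assms(2) by (simp add: divide_simps)
  with f(2) ln2_ge_two_thirds have "cond_exp_event M ?f E \<le> 2 * ln 2"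
    by linarith
  then have "cond_exp_event M ?f E / ln b \<le> 2 * ln 2 / ln b"
    using assms(3) by (intro divide_right_mono) auto
  moreover have "cond_exp_event M (\<lambda>\<omega>. ?f \<omega> / ln b) E = cond_exp_event M ?f E / ln b"
    by (simp add: cond_exp_event_def)
  ultimately have "cond_exp_event M (\<lambda>\<omega>. ?f \<omega> / ln b) E \<le> 2 * log b 2"
    by (simp add: log_def)
  moreover have "set_integrable M E (\<lambda>\<omega>. ?f \<omega> / ln b)"
    using f(1) by (rule set_integrable_divide)
  ultimately show ?thesis
    unfolding E_def log_def by simp
qed

end
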